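(* Let $p\in[0,1)$, $z=(z_1,\dots,z_N)\in\mathbb R^N_+$, $\beta\in\mathbb R^N$, and $z(t)=z+t\beta$ for $|t|$ small enough that $z(t)\in\mathbb R^N_+$. Write $\xi_p(t)=\xi_p(z(t))$. If $\xi_p(0)=o$, then $\xi_p'(0)$ exists, and moreover $$o=\sum_{j=1}^N z_j^{p-1}\alpha_jv_j.$$
   Context: $\mathbb R^N_+=\{x\in\mathbb R^N: x_i>0\ \forall i\}$. Fix unit vectors $v_1,\dots,v_N\in S^{n-1}$ not contained in any closed hemisphere and weights $\alpha_1,\dots,\alpha_N>0$. For $z\in\mathbb R^N$ let $[z]=\{x\in\mathbb R^n:x\cdot v_j\le z_j,\ j=1,\dots,N\}$ (for $z\in\mathbb R^N_+$ this contains $o$ in its interior). For $\xi\in[z]$, $\Phi_p(z,\xi)=\sum_j(z_j-\xi\cdot v_j)^p\alpha_j$ if $p\in(0,1)$ and $\Phi_0(z,\xi)=\sum_j\alpha_j\log(z_j-\xi\cdot v_j)$ (with $\log0=-\infty$). When $[z]$ has nonempty interior, $\xi_p(z)$ denotes the unique maximizer of $\Phi_p(z,\cdot)$ over $[z]$, which is known to lie in the interior of $[z]$. *)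

theory Defs
  imports "HOL-Analysis.Analysis"
begin

definition polyset :: "nat \<Rightarrow> (nat \<Rightarrow> 'a::euclidean_space) \<Rightarrow> (nat \<Rightarrow> real) \<Rightarrow> 'a set" where
  "polyset N v z = {x. \<forall>j<N. x \<bullet> v j \<le> z j}"

text \<open>Phi_p(z,xi) as an extended real; for p = 0 the log of 0 is -infinity.\<close>
definition Phi :: "nat \<Rightarrow> (nat \<Rightarrow> 'a::euclidean_space) \<Rightarrow> (nat \<Rightarrow> real) \<Rightarrow> real
                   \<Rightarrow> (nat \<Rightarrow> real) \<Rightarrow> 'a \<Rightarrow> ereal" where
  "Phi N v alpha p z \<xi> =
     (if p = 0 then
        (if (\<forall>j<N. z j - \<xi> \<bullet> v j > 0)
         then ereal (\<Sum>j<N. alpha j * ln (z j - \<xi> \<bullet> v j))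
         else -\<infinity>)
      else ereal (\<Sum>j<N. (z j - \<xi> \<bullet> v j) powr p * alpha j))"

definition xi :: "nat \<Rightarrow> (nat \<Rightarrow> 'a::euclidean_space) \<Rightarrow> (nat \<Rightarrow> real) \<Rightarrow> real
                   \<Rightarrow> (nat \<Rightarrow> real) \<Rightarrow> 'a" where
  "xi N v alpha p z =
     (THE \<xi>. \<xi> \<in> polyset N v z \<and>
        (\<forall>\<eta>\<in>polyset N v z. Phi N v alpha p z \<eta> \<le> Phi N v alpha p z \<xi>))"

end

theory Submission
  imports Defs
begin

text \<open>
On the interior of the polytope, \<open>Phi\<close> is the strictly concave function
\<open>\<Sum>j. alpha j * g (z j - \<xi> \<bullet> v j)\<close> with \<open>g = ln\<close> or \<open>g s = s powr p\<close>.
Since the \<open>v j\<close> lie in no closed hemisphere, the polytope is compact and \<open>Phi\<close> attains its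
maximum in the interior, where its gradient vanishes; conversely, by strict concavity an interior
critical point is the maximiser \<open>xi\<close>. So \<open>xi z = 0\<close> means that the gradient
\<open>\<Sum>j. z j powr (p - 1) * alpha j *\<^sub>R v j\<close> vanishes.

For the derivative, take \<open>D\<close> solving the linearised equation
\<open>\<Sum>j. alpha j * z j powr (p - 2) * (\<beta> j - v j \<bullet> D) *\<^sub>R v j = 0\<close>; the operator
\<open>D \<mapsto> \<Sum>j. c j * (v j \<bullet> D) *\<^sub>R v j\<close> is positive definite for positive weights \<open>c\<close>.
Then the gradient of \<open>Phi\<close> for the data \<open>z + t \<beta>\<close> at \<open>t D\<close> is \<open>o(t)\<close>, and the uniform strong
concavity of \<open>Phi\<close> near \<open>0\<close> makes \<open>Phi\<close> smaller on the sphere of radius \<open>e \<bar>t\<bar>\<close> about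
\<open>t D\<close> than at its centre. So the maximiser lies within \<open>e \<bar>t\<bar>\<close> of \<open>t D\<close>.
\<close>

definition powlog :: "real \<Rightarrow> real \<Rightarrow> real" where
  "powlog p s = (if p = 0 then ln s else s powr p)"

definition powlog_coeff :: "real \<Rightarrow> real" where
  "powlog_coeff p = (if p = 0 then 1 else p)"

definition powlog' :: "real \<Rightarrow> real \<Rightarrow> real" where
  "powlog' p s = powlog_coeff p * s powr (p - 1)"

definition powlog'' :: "real \<Rightarrow> real \<Rightarrow> real" where
  "powlog'' p s = powlog_coeff p * (p - 1) * s powr (p - 2)"

lemma powlog_coeff_pos: "0 \<le> p \<Longrightarrow> powlog_coeff p > 0"
  by (auto simp: powlog_coeff_def)

lemma has_real_derivative_powlog:
  assumes "s > 0" shows "(powlog p has_real_derivative powlog' p s) (at s)"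
proof (cases "p = 0")
  case True
  have "(ln has_real_derivative inverse s) (at s)" using DERIV_ln assms by blast
  then show ?thesis using True assms by (simp add: powlog_def[abs_def] powlog'_def powlog_coeff_def powr_minus)
next
  case False
  have "((\<lambda>s. s powr p) has_real_derivative p * s powr (p - 1)) (at s)"
    using has_real_derivative_powr assms by blast
  then show ?thesis using False by (simp add: powlog_def[abs_def] powlog'_def powlog_coeff_def)
qed

lemma has_real_derivative_powlog':
  assumes "s > 0" shows "(powlog' p has_real_derivative powlog'' p s) (at s)"
proof -
  have "((\<lambda>s. s powr (p - 1)) has_real_derivative (p - 1) * s powr (p - 1 - 1)) (at s)"
    using has_real_derivative_powr assms by blast
  from DERIV_cmult[OF this, of "powlog_coeff p"] show ?thesis
    by (simp add: powlog'_def[abs_def] powlog''_def algebra_simps)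
qed

lemma powlog''_neg: "0 \<le> p \<Longrightarrow> p < 1 \<Longrightarrow> s > 0 \<Longrightarrow> powlog'' p s < 0"
  using powlog_coeff_pos[of p] by (simp add: powlog''_def mult_pos_neg mult_neg_pos)

lemma powlog_Taylor:
  assumes a: "a > 0" and b: "b > 0" and ne: "b \<noteq> a"
  obtains \<theta> where "0 < \<theta>" "\<theta> \<le> max a b"
    "powlog p b = powlog p a + powlog' p a * (b - a) + powlog'' p \<theta> / 2 * (b - a)\<^sup>2"
proof -
  define diff where "diff m = (if m = 0 then powlog p else if m = 1 then powlog' p else powlog'' p)"
    for m :: nat
  have "(diff m has_real_derivative diff (Suc m) t) (at t)"
    if "m < 2" "min a b \<le> t" "t \<le> max a b" for m t
  proof -
    have "t > 0" using that a b by linarith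
    then show ?thesis using that has_real_derivative_powlog has_real_derivative_powlog'
      by (auto simp: diff_def less_2_cases_iff)
  qed
  then obtain t where t: "if b < a then b < t \<and> t < a else a < t \<and> t < b"
    and eq: "powlog p b = (\<Sum>m<2. diff m a / fact m * (b - a) ^ m) + diff 2 t / fact 2 * (b - a) ^ 2"
    using Taylor[of 2 diff "powlog p" "min a b" "max a b" a b] ne by (auto simp: diff_def)
  show ?thesis
    by (rule that[of t]) (use t a b eq in \<open>auto simp: diff_def numeral_2_eq_2 split: if_splits\<close>)
qed

lemma powlog_below_tangent:
  assumes p: "0 \<le> p" "p < 1" and a: "a > 0" and b: "b \<ge> 0" "p = 0 \<Longrightarrow> b > 0" and ne: "b \<noteq> a"
  shows "powlog p b < powlog p a + powlog' p a * (b - a)"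
proof (cases "b = 0")
  case True
  with p b have "p > 0" by force
  have "a powr (p - 1) * a = a powr p" using a by (simp add: powr_diff)
  then have "powlog' p a * (b - a) = - p * a powr p"
    using True \<open>p > 0\<close> by (simp add: powlog'_def powlog_coeff_def algebra_simps)
  then show ?thesis using True \<open>p > 0\<close> p a by (simp add: powlog_def)
next
  case False
  with b have "b > 0" by auto
  then obtain \<theta> where "0 < \<theta>"
    "powlog p b = powlog p a + powlog' p a * (b - a) + powlog'' p \<theta> / 2 * (b - a)\<^sup>2"
    using powlog_Taylor a ne by metis
  moreover have "powlog'' p \<theta> / 2 * (b - a)\<^sup>2 < 0"
    using powlog''_neg[OF p \<open>0 < \<theta>\<close>] ne by (simp add: mult_neg_pos)
  ultimately show ?thesis by linarith
qed

lemma powlog_below_tangent_quadratic: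
  assumes p: "0 \<le> p" "p < 1" and a: "0 < a" "a \<le> hi" and b: "0 < b" "b \<le> hi"
  shows "powlog p b \<le> powlog p a + powlog' p a * (b - a)
           - powlog_coeff p * (1 - p) * hi powr (p - 2) / 2 * (b - a)\<^sup>2"
proof (cases "b = a")
  case False
  then obtain \<theta> where \<theta>: "0 < \<theta>" "\<theta> \<le> max a b"
    "powlog p b = powlog p a + powlog' p a * (b - a) + powlog'' p \<theta> / 2 * (b - a)\<^sup>2"
    using powlog_Taylor a b by metis
  have "hi powr (p - 2) \<le> \<theta> powr (p - 2)"
    using powr_mono2'[of "p - 2" \<theta> hi] \<theta> a b p by simp
  then have "powlog_coeff p * (1 - p) * hi powr (p - 2) \<le> powlog_coeff p * (1 - p) * \<theta> powr (p - 2)"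
    using powlog_coeff_pos[OF p(1)] p by (intro mult_left_mono) auto
  then have "powlog'' p \<theta> \<le> - (powlog_coeff p * (1 - p) * hi powr (p - 2))"
    by (simp add: powlog''_def algebra_simps)
  then have "powlog'' p \<theta> * (b - a)\<^sup>2 \<le> - (powlog_coeff p * (1 - p) * hi powr (p - 2)) * (b - a)\<^sup>2"
    by (rule mult_right_mono) simp
  then show ?thesis using \<theta>(3) by simp
qed simp

definition Phi_real :: "nat \<Rightarrow> (nat \<Rightarrow> 'a::euclidean_space) \<Rightarrow> (nat \<Rightarrow> real) \<Rightarrow> real
                        \<Rightarrow> (nat \<Rightarrow> real) \<Rightarrow> 'a \<Rightarrow> real" where
  "Phi_real N v alpha p z \<xi> = (\<Sum>j<N. alpha j * powlog p (z j - \<xi> \<bullet> v j))"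

text \<open>The gradient of \<open>Phi_real N v alpha p z\<close> at \<open>\<xi>\<close> is \<open>- powlog_coeff p\<close> times this vector.\<close>
definition Phi_grad :: "nat \<Rightarrow> (nat \<Rightarrow> 'a::euclidean_space) \<Rightarrow> (nat \<Rightarrow> real) \<Rightarrow> real
                        \<Rightarrow> (nat \<Rightarrow> real) \<Rightarrow> 'a \<Rightarrow> 'a" where
  "Phi_grad N v alpha p z \<xi> = (\<Sum>j<N. ((z j - \<xi> \<bullet> v j) powr (p - 1) * alpha j) *\<^sub>R v j)"

lemma Phi_eq_Phi_real:
  "(\<forall>j<N. z j - \<xi> \<bullet> v j > 0) \<or> p \<noteq> 0 \<Longrightarrow> Phi N v alpha p z \<xi> = ereal (Phi_real N v alpha p z \<xi>)"
  by (auto simp: Phi_def Phi_real_def powlog_def mult.commute)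

lemma Phi_real_tangent_term:
  "(\<Sum>j<N. alpha j * (powlog' p (z j - m \<bullet> v j) * ((z j - \<eta> \<bullet> v j) - (z j - m \<bullet> v j))))
   = - powlog_coeff p * (Phi_grad N v alpha p z m \<bullet> (\<eta> - m))"
proof -
  have "Phi_grad N v alpha p z m \<bullet> (\<eta> - m)
     = (\<Sum>j<N. ((z j - m \<bullet> v j) powr (p - 1) * alpha j) * (v j \<bullet> (\<eta> - m)))"
    by (simp add: Phi_grad_def inner_sum_left)
  moreover have "(z j - \<eta> \<bullet> v j) - (z j - m \<bullet> v j) = - (v j \<bullet> (\<eta> - m))" for j
    by (simp add: inner_diff_right inner_commute)
  ultimately show ?thesis
    by (simp add: sum_distrib_left powlog'_def sum_negf[symmetric]) (simp add: algebra_simps)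
qed

lemma continuous_on_Phi_real:
  assumes "\<forall>\<xi>\<in>S. \<forall>j<N. z j - \<xi> \<bullet> v j > 0"
  shows "continuous_on S (Phi_real N v alpha p z)"
proof -
  have "continuous_on S (\<lambda>\<xi>. powlog p (z j - \<xi> \<bullet> v j))" if "j < N" for j
  proof (cases "p = 0")
    case True
    then show ?thesis unfolding powlog_def using assms that by (auto intro!: continuous_intros) force
  next
    case False
    then show ?thesis unfolding powlog_def using assms that
      by (auto intro!: continuous_intros continuous_on_powr' less_imp_le) force
  qed
  then show ?thesis unfolding Phi_real_def[abs_def] by (intro continuous_intros) auto
qed

lemma Phi_grad_eq_0_if_local_max:
  fixes v :: "nat \<Rightarrow> 'a::euclidean_space"
  assumes pos: "\<forall>j<N. z j - m \<bullet> v j > 0" and "e > 0" and "0 \<le> p"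
    and max: "\<forall>\<xi>\<in>ball m e. Phi_real N v alpha p z \<xi> \<le> Phi_real N v alpha p z m"
  shows "Phi_grad N v alpha p z m = 0"
proof -
  define u where "u = Phi_grad N v alpha p z m"
  define h where "h t = Phi_real N v alpha p z (m + t *\<^sub>R u)" for t
  have "((\<lambda>t. alpha j * powlog p (z j - (m + t *\<^sub>R u) \<bullet> v j)) has_real_derivative
          alpha j * (powlog' p (z j - m \<bullet> v j) * ((z j - (m + u) \<bullet> v j) - (z j - m \<bullet> v j)))) (at 0)"
    if "j < N" for j
  proof -
    have "((\<lambda>t. z j - (m + t *\<^sub>R u) \<bullet> v j) has_real_derivative - (u \<bullet> v j)) (at 0)"
      by (auto intro!: derivative_eq_intros simp: inner_add_left)
    moreover have "(powlog p has_real_derivative powlog' p (z j - m \<bullet> v j)) (at (z j - (m + 0 *\<^sub>R u) \<bullet> v j))"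
      using has_real_derivative_powlog pos that by simp
    ultimately have "((\<lambda>t. powlog p (z j - (m + t *\<^sub>R u) \<bullet> v j)) has_real_derivative
        powlog' p (z j - m \<bullet> v j) * - (u \<bullet> v j)) (at 0)"
      by (rule DERIV_chain2[rotated])
    from DERIV_cmult[OF this, of "alpha j"] show ?thesis by (simp add: inner_add_left)
  qed
  then have "(h has_real_derivative
      (\<Sum>j<N. alpha j * (powlog' p (z j - m \<bullet> v j) * ((z j - (m + u) \<bullet> v j) - (z j - m \<bullet> v j))))) (at 0)"
    unfolding h_def Phi_real_def by (auto intro!: DERIV_sum)
  then have der: "(h has_real_derivative - powlog_coeff p * (u \<bullet> u)) (at 0)"
    by (simp only: Phi_real_tangent_term u_def) simp
  have "\<forall>t. \<bar>0 - t\<bar> < e / (norm u + 1) \<longrightarrow> h t \<le> h 0"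
  proof (intro allI impI)
    fix t :: real assume "\<bar>0 - t\<bar> < e / (norm u + 1)"
    then have "\<bar>t\<bar> * (norm u + 1) < e" by (simp add: pos_less_divide_eq add_nonneg_pos)
    moreover have "norm (t *\<^sub>R u) \<le> \<bar>t\<bar> * (norm u + 1)" by (simp add: distrib_left)
    ultimately have "norm (t *\<^sub>R u) < e" by linarith
    then show "h t \<le> h 0" using max by (simp add: h_def dist_norm)
  qed
  moreover have "e / (norm u + 1) > 0" using \<open>e > 0\<close> by (simp add: add_nonneg_pos)
  ultimately have "- powlog_coeff p * (u \<bullet> u) = 0"
    using DERIV_local_max[OF der] by blast
  then show ?thesis using powlog_coeff_pos[OF \<open>0 \<le> p\<close>] by (simp add: u_def)
qed

lemma xi_eqI:
  assumes "m \<in> polyset N v z"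
    and "\<And>\<eta>. \<eta> \<in> polyset N v z \<Longrightarrow> \<eta> \<noteq> m \<Longrightarrow> Phi N v alpha p z \<eta> < Phi N v alpha p z m"
  shows "xi N v alpha p z = m"
  unfolding xi_def
proof (rule the_equality)
  show "m \<in> polyset N v z \<and> (\<forall>\<eta>\<in>polyset N v z. Phi N v alpha p z \<eta> \<le> Phi N v alpha p z m)"
    using assms by (metis order.order_iff_strict)
next
  fix \<xi> assume "\<xi> \<in> polyset N v z \<and> (\<forall>\<eta>\<in>polyset N v z. Phi N v alpha p z \<eta> \<le> Phi N v alpha p z \<xi>)"
  then show "\<xi> = m" using assms by (meson leD)
qed

lemma Phi_less_if_Phi_grad_eq_0:
  fixes v :: "nat \<Rightarrow> 'a::euclidean_space"
  assumes not_hemi: "\<forall>u::'a. norm u = 1 \<longrightarrow> (\<exists>j<N. v j \<bullet> u < 0)"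
    and alpha_pos: "\<forall>j<N. alpha j > 0" and p: "0 \<le> p" "p < 1"
    and m_pos: "\<forall>j<N. z j - m \<bullet> v j > 0" and crit: "Phi_grad N v alpha p z m = 0"
    and \<eta>: "\<eta> \<in> polyset N v z" "\<eta> \<noteq> m"
  shows "Phi N v alpha p z \<eta> < Phi N v alpha p z m"
proof (cases "p = 0 \<and> (\<exists>j<N. z j - \<eta> \<bullet> v j \<le> 0)")
  case True
  then show ?thesis using Phi_eq_Phi_real m_pos by (auto simp: Phi_def)
next
  case False
  define a where "a j = z j - m \<bullet> v j" for j
  define b where "b j = z j - \<eta> \<bullet> v j" for j
  have b_nonneg: "j < N \<Longrightarrow> b j \<ge> 0" for j using \<eta>(1) by (auto simp: polyset_def b_def)
  have tangent: "alpha j * powlog p (b j) \<le> alpha j * (powlog p (a j) + powlog' p (a j) * (b j - a j))"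
    and tangent_strict: "b j \<noteq> a j \<Longrightarrow>
      alpha j * powlog p (b j) < alpha j * (powlog p (a j) + powlog' p (a j) * (b j - a j))"
    if "j < N" for j
    using powlog_below_tangent[OF p, of "a j" "b j"] b_nonneg[OF that] False m_pos alpha_pos that
    by (fastforce simp: a_def b_def)+
  obtain j0 where j0: "j0 < N" "v j0 \<bullet> ((1 / norm (\<eta> - m)) *\<^sub>R (\<eta> - m)) < 0"
  proof -
    have "norm ((1 / norm (\<eta> - m)) *\<^sub>R (\<eta> - m)) = 1" using \<eta>(2) by simp
    then show thesis using not_hemi that by blast
  qed
  then have "b j0 \<noteq> a j0" by (auto simp: a_def b_def inner_diff_right inner_commute)
  then have "(\<Sum>j<N. alpha j * powlog p (b j))
      < (\<Sum>j<N. alpha j * (powlog p (a j) + powlog' p (a j) * (b j - a j)))"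
    using tangent tangent_strict j0(1) by (intro sum_strict_mono_ex1) auto
  also have "\<dots> = (\<Sum>j<N. alpha j * powlog p (a j))
      - powlog_coeff p * (Phi_grad N v alpha p z m \<bullet> (\<eta> - m))"
    using Phi_real_tangent_term[where \<eta> = \<eta> and m = m]
    by (simp add: a_def b_def sum.distrib distrib_left)
  finally have "Phi_real N v alpha p z \<eta> < Phi_real N v alpha p z m"
    using crit by (simp add: Phi_real_def a_def b_def)
  moreover have "Phi N v alpha p z \<eta> = ereal (Phi_real N v alpha p z \<eta>)"
    using False by (intro Phi_eq_Phi_real) (auto simp: not_le)
  moreover have "Phi N v alpha p z m = ereal (Phi_real N v alpha p z m)"
    using m_pos by (intro Phi_eq_Phi_real) simp
  ultimately show ?thesis by simp
qed

lemma xi_eq_if_Phi_grad_eq_0: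
  fixes v :: "nat \<Rightarrow> 'a::euclidean_space"
  assumes "\<forall>u::'a. norm u = 1 \<longrightarrow> (\<exists>j<N. v j \<bullet> u < 0)"
    and "\<forall>j<N. alpha j > 0" and "0 \<le> p" "p < 1"
    and m_pos: "\<forall>j<N. z j - m \<bullet> v j > 0" and "Phi_grad N v alpha p z m = 0"
  shows "xi N v alpha p z = m"
proof (rule xi_eqI)
  show "m \<in> polyset N v z" using m_pos by (auto simp: polyset_def less_imp_le)
qed (use Phi_less_if_Phi_grad_eq_0 assms in blast)

lemma sphere_lower_bound:
  fixes f :: "'a::euclidean_space \<Rightarrow> real"
  assumes "continuous_on (sphere 0 1) f" and "\<forall>u\<in>sphere 0 1. f u > 0"
  obtains \<kappa> where "\<kappa> > 0" "\<forall>u\<in>sphere 0 1. \<kappa> \<le> f u"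
proof -
  obtain x :: 'a where "norm x = 1" using vector_choose_size[of 1] by auto
  then have "sphere (0::'a) 1 \<noteq> {}" by auto
  then obtain u0 where "u0 \<in> sphere 0 1" "\<forall>u\<in>sphere 0 1. f u0 \<le> f u"
    using continuous_attains_inf[OF compact_sphere _ assms(1)] by blast
  then show ?thesis using assms(2) that by blast
qed

lemma weighted_frame_lower_bound:
  fixes v :: "nat \<Rightarrow> 'a::euclidean_space"
  assumes not_hemi: "\<forall>u::'a. norm u = 1 \<longrightarrow> (\<exists>j<N. v j \<bullet> u < 0)"
    and c_pos: "\<forall>j<N. c j > 0"
  obtains \<kappa> where "\<kappa> > 0" "\<forall>u\<in>sphere 0 1. \<kappa> \<le> (\<Sum>j<N. c j * (v j \<bullet> u)\<^sup>2)"
proof -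
  have "\<forall>u\<in>sphere 0 1. 0 < (\<Sum>j<N. c j * (v j \<bullet> u)\<^sup>2)"
    using not_hemi c_pos by (force intro: sum_pos2)
  moreover have "continuous_on (sphere 0 1) (\<lambda>u. \<Sum>j<N. c j * (v j \<bullet> u)\<^sup>2)"
    by (intro continuous_intros)
  ultimately show thesis using sphere_lower_bound that by blast
qed

lemma bounded_polyset:
  fixes v :: "nat \<Rightarrow> 'a::euclidean_space"
  assumes not_hemi: "\<forall>u::'a. norm u = 1 \<longrightarrow> (\<exists>j<N. v j \<bullet> u < 0)"
  shows "bounded (polyset N v z)"
proof -
  have "\<exists>j<N. 0 < v j \<bullet> u" if "norm u = 1" for u
    using not_hemi[rule_format, of "- u"] that by auto
  then have "\<forall>u\<in>sphere 0 1. 0 < (\<Sum>j<N. max 0 (v j \<bullet> u))"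
    by (force intro: sum_pos2)
  moreover have "continuous_on (sphere 0 1) (\<lambda>u. \<Sum>j<N. max 0 (v j \<bullet> u))"
    by (intro continuous_intros)
  ultimately obtain \<kappa> where \<kappa>: "\<kappa> > 0" "\<forall>u\<in>sphere 0 1. \<kappa> \<le> (\<Sum>j<N. max 0 (v j \<bullet> u))"
    using sphere_lower_bound by blast
  have "\<kappa> * norm x \<le> (\<Sum>j<N. \<bar>z j\<bar>)" if x: "x \<in> polyset N v z" for x
  proof (cases "x = 0")
    case False
    define u where "u = (1 / norm x) *\<^sub>R x"
    have "u \<in> sphere 0 1" using False by (simp add: u_def)
    then have "\<kappa> * norm x \<le> (\<Sum>j<N. max 0 (v j \<bullet> u)) * norm x"
      using \<kappa> by (simp add: mult_right_mono)
    also have "\<dots> = (\<Sum>j<N. max 0 (v j \<bullet> x))"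
      using False by (simp add: u_def sum_distrib_right max_mult_distrib_right)
    also have "\<dots> \<le> (\<Sum>j<N. \<bar>z j\<bar>)"
      using x by (intro sum_mono) (auto simp: polyset_def inner_commute)
    finally show ?thesis .
  qed (simp add: sum_nonneg)
  then show ?thesis
    unfolding bounded_iff using \<kappa>(1) by (metis mult.commute pos_le_divide_eq)
qed

lemma compact_polyset:
  fixes v :: "nat \<Rightarrow> 'a::euclidean_space"
  assumes "\<forall>u::'a. norm u = 1 \<longrightarrow> (\<exists>j<N. v j \<bullet> u < 0)"
  shows "compact (polyset N v z)"
proof -
  have "polyset N v z = (\<Inter>j\<in>{..<N}. {x. v j \<bullet> x \<le> z j})"
    by (auto simp: polyset_def inner_commute)
  then have "closed (polyset N v z)" by (auto intro!: closed_INT closed_halfspace_le)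
  then show ?thesis using bounded_polyset[OF assms] compact_eq_bounded_closed by blast
qed

lemma open_slack_pos: "open {\<xi>::'a::euclidean_space. \<forall>j<(N::nat). z j - \<xi> \<bullet> v j > 0}"
proof -
  have "{\<xi>::'a. \<forall>j<N. z j - \<xi> \<bullet> v j > 0} = (\<Inter>j\<in>{..<N}. {x. v j \<bullet> x < z j})"
    by (auto simp: inner_commute)
  then show ?thesis by (auto intro!: open_INT open_halfspace_lt simp del: Inter_iff)
qed

lemma exists_powr_dominates_linear:
  fixes p b A :: real
  assumes p: "0 < p" "p < 1" and "b > 0" and "A \<ge> 0"
  obtains l where "0 < l" "l < 1" "l * A < l powr p * b"
proof -
  have "((\<lambda>x::real. x powr (1 - p)) \<longlongrightarrow> 0) (at_right 0)"
    by (rule tendsto_zero_powrI[where b = "1 - p"])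
       (use p in \<open>auto intro: tendsto_ident_at eventually_at_rightI[of 0 1]\<close>)
  then have "eventually (\<lambda>x. x powr (1 - p) < b / (A + 1)) (at_right 0)"
    using assms by (intro order_tendstoD) auto
  moreover have "eventually (\<lambda>x::real. x < 1) (at_right 0)"
    by (intro eventually_at_rightI[of 0 1]) auto
  ultimately have "eventually (\<lambda>x::real. 0 < x \<and> x < 1 \<and> x powr (1 - p) < b / (A + 1)) (at_right 0)"
    using eventually_at_right_less by eventually_elim auto
  then obtain l where l: "0 < l" "l < 1" "l powr (1 - p) < b / (A + 1)"
    using eventually_happens by force
  then have "l powr p * (l powr (1 - p) * (A + 1)) < l powr p * b"
    using \<open>A \<ge> 0\<close> by (simp add: pos_less_divide_eq)
  moreover have "l powr p * l powr (1 - p) = l" using l by (simp add: powr_add[symmetric])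
  ultimately have "l * (A + 1) < l powr p * b" by (simp add: mult.assoc[symmetric])
  then show ?thesis using l that by (simp add: algebra_simps)
qed

lemma exists_interior_max_Phi_real_log:
  fixes v :: "nat \<Rightarrow> 'a::euclidean_space"
  assumes not_hemi: "\<forall>u::'a. norm u = 1 \<longrightarrow> (\<exists>j<N. v j \<bullet> u < 0)"
    and alpha_pos: "\<forall>j<N. alpha j > 0" and z_pos: "\<forall>j<N. z j > 0"
  obtains m where "\<forall>j<N. z j - m \<bullet> v j > 0"
    "\<And>\<xi>. \<forall>j<N. z j - \<xi> \<bullet> v j > 0 \<Longrightarrow> Phi_real N v alpha 0 z \<xi> \<le> Phi_real N v alpha 0 z m"
proof -
  text \<open>\<open>exp \<circ> Phi_real\<close> extends continuously by \<open>0\<close> to the boundary of the polytope.\<close>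
  define F where "F \<xi> = (\<Prod>j<N. (z j - \<xi> \<bullet> v j) powr alpha j)" for \<xi>
  have slack: "z j - \<xi> \<bullet> v j \<ge> 0" if "\<xi> \<in> polyset N v z" "j < N" for \<xi> j
    using that by (simp add: polyset_def)
  have "continuous_on (polyset N v z) F"
    unfolding F_def using slack alpha_pos by (intro continuous_intros continuous_on_powr') auto
  moreover have zero_in: "0 \<in> polyset N v z" using z_pos by (auto simp: polyset_def less_imp_le)
  ultimately obtain m where m: "m \<in> polyset N v z" "\<forall>\<xi>\<in>polyset N v z. F \<xi> \<le> F m"
    using continuous_attains_sup[OF compact_polyset[OF not_hemi]] by blast
  have "F 0 > 0" unfolding F_def using z_pos by (intro prod_pos) auto
  then have "F m \<noteq> 0" using m zero_in by force
  then have m_pos: "\<forall>j<N. z j - m \<bullet> v j > 0"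
    using slack[OF m(1)] by (force simp: F_def le_less)
  have Phi_real_eq: "Phi_real N v alpha 0 z \<xi> = ln (F \<xi>)" if "\<forall>j<N. z j - \<xi> \<bullet> v j > 0" for \<xi>
    using that unfolding Phi_real_def powlog_def F_def by (subst ln_prod) (auto simp: ln_powr)
  show ?thesis
  proof (rule that[OF m_pos])
    fix \<xi> assume \<xi>: "\<forall>j<N. z j - \<xi> \<bullet> v j > 0"
    then have "F \<xi> > 0" "\<xi> \<in> polyset N v z"
      unfolding F_def polyset_def by (auto intro!: prod_pos less_imp_le)
    then show "Phi_real N v alpha 0 z \<xi> \<le> Phi_real N v alpha 0 z m"
      using m(2) \<xi> m_pos by (simp add: Phi_real_eq ln_mono)
  qed
qed

lemma powr_convex_comb_ge:
  fixes p l s t :: real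
  assumes "0 < p" "p \<le> 1" "0 \<le> l" "l \<le> 1" "0 \<le> s" "0 \<le> t"
  shows "(1 - l) * s powr p \<le> ((1 - l) * s + l * t) powr p"
proof -
  have "(1 - l) * s powr p \<le> (1 - l) powr p * s powr p"
    using powr_mono'[of p 1 "1 - l"] assms by (intro mult_right_mono) auto
  also have "\<dots> = ((1 - l) * s) powr p" using assms by (simp add: powr_mult)
  also have "\<dots> \<le> ((1 - l) * s + l * t) powr p" using assms by (intro powr_mono2) auto
  finally show ?thesis .
qed

lemma exists_interior_max_Phi_real_powr:
  fixes v :: "nat \<Rightarrow> 'a::euclidean_space"
  assumes not_hemi: "\<forall>u::'a. norm u = 1 \<longrightarrow> (\<exists>j<N. v j \<bullet> u < 0)"
    and alpha_pos: "\<forall>j<N. alpha j > 0" and p: "0 < p" "p < 1" and z_pos: "\<forall>j<N. z j > 0"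
  obtains m where "\<forall>j<N. z j - m \<bullet> v j > 0"
    "\<And>\<xi>. \<forall>j<N. z j - \<xi> \<bullet> v j > 0 \<Longrightarrow> Phi_real N v alpha p z \<xi> \<le> Phi_real N v alpha p z m"
proof -
  have slack: "z j - \<xi> \<bullet> v j \<ge> 0" if "\<xi> \<in> polyset N v z" "j < N" for \<xi> j
    using that by (simp add: polyset_def)
  have Phi_real_eq: "Phi_real N v alpha p z \<xi> = (\<Sum>j<N. alpha j * (z j - \<xi> \<bullet> v j) powr p)" for \<xi>
    using p by (simp add: Phi_real_def powlog_def)
  have "continuous_on (polyset N v z) (Phi_real N v alpha p z)"
    unfolding Phi_real_eq[abs_def] using slack p by (intro continuous_intros continuous_on_powr') auto
  moreover have "0 \<in> polyset N v z" using z_pos by (auto simp: polyset_def less_imp_le)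
  ultimately obtain m where m: "m \<in> polyset N v z"
    "\<forall>\<xi>\<in>polyset N v z. Phi_real N v alpha p z \<xi> \<le> Phi_real N v alpha p z m"
    using continuous_attains_sup[OF compact_polyset[OF not_hemi]] by blast
  have m_pos: "\<forall>j<N. z j - m \<bullet> v j > 0"
  proof (rule ccontr)
    text \<open>Moving \<open>m\<close> towards \<open>0\<close> by a factor \<open>1 - l\<close> gains order \<open>l powr p\<close> on a vanishing
      slack and loses at most order \<open>l\<close> elsewhere.\<close>
    assume "\<not> (\<forall>j<N. z j - m \<bullet> v j > 0)"
    then obtain j0 where j0: "j0 < N" "z j0 - m \<bullet> v j0 = 0"
      using slack[OF m(1)] by (force simp: le_less)
    define A where "A = Phi_real N v alpha p z m"
    define b where "b = alpha j0 * z j0 powr p"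
    have "A \<ge> 0" unfolding A_def Phi_real_eq using alpha_pos by (intro sum_nonneg) (simp add: less_imp_le)
    moreover have "b > 0" using alpha_pos z_pos j0(1) unfolding b_def by (intro mult_pos_pos) auto
    ultimately obtain l where l: "0 < l" "l < 1" "l * A < l powr p * b"
      using exists_powr_dominates_linear p by blast
    define \<xi> where "\<xi> = (1 - l) *\<^sub>R m"
    have slack_\<xi>: "z j - \<xi> \<bullet> v j = (1 - l) * (z j - m \<bullet> v j) + l * z j" for j
      by (simp add: \<xi>_def algebra_simps)
    have "\<xi> \<in> polyset N v z"
    proof -
      have "z j - \<xi> \<bullet> v j \<ge> 0" if "j < N" for j
        unfolding slack_\<xi> using slack[OF m(1) that] z_pos that l by (intro add_nonneg_nonneg) auto
      then show ?thesis by (simp add: polyset_def)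
    qed
    have "(1 - l) * (alpha j * (z j - m \<bullet> v j) powr p) + (if j = j0 then l powr p * b else 0)
          \<le> alpha j * (z j - \<xi> \<bullet> v j) powr p" if j: "j < N" for j
    proof (cases "j = j0")
      case True
      then show ?thesis using j0 z_pos l unfolding slack_\<xi> b_def by (simp add: powr_mult)
    next
      case False
      have "(1 - l) * (z j - m \<bullet> v j) powr p \<le> (z j - \<xi> \<bullet> v j) powr p"
        unfolding slack_\<xi> using p l slack[OF m(1) j] z_pos j by (intro powr_convex_comb_ge) auto
      then show ?thesis using False alpha_pos j by (simp add: mult_left_mono mult.left_commute)
    qed
    then have "(\<Sum>j<N. (1 - l) * (alpha j * (z j - m \<bullet> v j) powr p)
                  + (if j = j0 then l powr p * b else 0)) \<le> Phi_real N v alpha p z \<xi>"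
      unfolding Phi_real_eq by (intro sum_mono) auto
    also have "\<dots> \<le> A" using m(2) \<open>\<xi> \<in> polyset N v z\<close> by (simp add: A_def)
    finally have "(1 - l) * A + l powr p * b \<le> A"
      using j0(1) by (simp add: sum.distrib sum_distrib_left A_def Phi_real_eq)
    then show False using l by (simp add: algebra_simps)
  qed
  show ?thesis
  proof (rule that[OF m_pos])
    fix \<xi> assume "\<forall>j<N. z j - \<xi> \<bullet> v j > 0"
    then have "\<xi> \<in> polyset N v z" by (auto simp: polyset_def less_imp_le)
    then show "Phi_real N v alpha p z \<xi> \<le> Phi_real N v alpha p z m" using m(2) by blast
  qed
qed

lemma xi_eq_if_local_max:
  fixes v :: "nat \<Rightarrow> 'a::euclidean_space"
  assumes "\<forall>u::'a. norm u = 1 \<longrightarrow> (\<exists>j<N. v j \<bullet> u < 0)"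
    and "\<forall>j<N. alpha j > 0" and "0 \<le> p" "p < 1"
    and "\<forall>j<N. z j - m \<bullet> v j > 0" and "e > 0"
    and "\<forall>\<xi>\<in>ball m e. Phi_real N v alpha p z \<xi> \<le> Phi_real N v alpha p z m"
  shows "xi N v alpha p z = m"
  using assms by (intro xi_eq_if_Phi_grad_eq_0 Phi_grad_eq_0_if_local_max)

lemma exists_critical_point:
  fixes v :: "nat \<Rightarrow> 'a::euclidean_space"
  assumes not_hemi: "\<forall>u::'a. norm u = 1 \<longrightarrow> (\<exists>j<N. v j \<bullet> u < 0)"
    and alpha_pos: "\<forall>j<N. alpha j > 0" and p: "0 \<le> p" "p < 1" and z_pos: "\<forall>j<N. z j > 0"
  obtains m where "\<forall>j<N. z j - m \<bullet> v j > 0" "Phi_grad N v alpha p z m = 0"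
proof -
  obtain m where m_pos: "\<forall>j<N. z j - m \<bullet> v j > 0"
    and max: "\<And>\<xi>. \<forall>j<N. z j - \<xi> \<bullet> v j > 0 \<Longrightarrow> Phi_real N v alpha p z \<xi> \<le> Phi_real N v alpha p z m"
  proof (cases "p = 0")
    case True
    then show thesis using exists_interior_max_Phi_real_log[OF not_hemi alpha_pos z_pos] that
      by metis
  next
    case False
    with p(1) have "0 < p" by simp
    then show thesis using exists_interior_max_Phi_real_powr[OF not_hemi alpha_pos _ p(2) z_pos] that
      by metis
  qed
  obtain e where "e > 0" "ball m e \<subseteq> {\<xi>. \<forall>j<N. z j - \<xi> \<bullet> v j > 0}"
    using open_slack_pos m_pos openE by blast
  then have "Phi_grad N v alpha p z m = 0"
    using max by (intro Phi_grad_eq_0_if_local_max[OF m_pos _ p(1)]) auto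
  with m_pos show thesis by (rule that)
qed

lemma weighted_frame_operator_surj:
  fixes v :: "nat \<Rightarrow> 'a::euclidean_space"
  assumes not_hemi: "\<forall>u::'a. norm u = 1 \<longrightarrow> (\<exists>j<N. v j \<bullet> u < 0)"
    and c_pos: "\<forall>j<N. c j > 0"
  obtains D where "(\<Sum>j<N. (c j * (v j \<bullet> D)) *\<^sub>R v j) = y"
proof -
  define L where "L x = (\<Sum>j<N. (c j * (v j \<bullet> x)) *\<^sub>R v j)" for x
  have lin: "linear L"
    by (rule linearI) (simp_all add: L_def inner_add_right scaleR_add_left sum.distrib
        algebra_simps scaleR_sum_right)
  have "x = 0" if "L x = 0" for x
  proof (rule ccontr)
    assume "x \<noteq> 0"
    then have "norm ((1 / norm x) *\<^sub>R x) = 1" by simp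
    then obtain j where j: "j < N" "v j \<bullet> x \<noteq> 0" using not_hemi by fastforce
    have "0 < (\<Sum>j<N. c j * (v j \<bullet> x)\<^sup>2)"
      using j c_pos by (intro sum_pos2[of _ j]) (auto intro: less_imp_le)
    also have "\<dots> = x \<bullet> L x"
      by (simp add: L_def inner_sum_right power2_eq_square inner_commute algebra_simps)
    finally show False using that by simp
  qed
  then have "surj L" using lin linear_injective_0 linear_injective_imp_surjective by blast
  then show thesis using that by (metis L_def surjD)
qed

lemma Phi_grad_has_vector_derivative:
  fixes v :: "nat \<Rightarrow> 'a::euclidean_space"
  assumes pos: "\<forall>j<N. z j - m \<bullet> v j > 0"
  shows "((\<lambda>t. Phi_grad N v alpha p (\<lambda>j. z j + t * \<beta> j) (m + t *\<^sub>R D)) has_vector_derivative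
      (p - 1) *\<^sub>R (\<Sum>j<N. (alpha j * (z j - m \<bullet> v j) powr (p - 2) * (\<beta> j - v j \<bullet> D)) *\<^sub>R v j)) (at 0)"
proof -
  have "((\<lambda>t. ((z j + t * \<beta> j - (m + t *\<^sub>R D) \<bullet> v j) powr (p - 1) * alpha j) *\<^sub>R v j)
      has_vector_derivative ((p - 1) * (alpha j * (z j - m \<bullet> v j) powr (p - 2) * (\<beta> j - v j \<bullet> D))) *\<^sub>R v j) (at 0)"
    if "j < N" for j
  proof -
    have "((\<lambda>t. z j - m \<bullet> v j + t * (\<beta> j - v j \<bullet> D)) has_real_derivative \<beta> j - v j \<bullet> D) (at 0)"
      by (auto intro!: derivative_eq_intros)
    moreover have "((\<lambda>s. s powr (p - 1)) has_real_derivative (p - 1) * (z j - m \<bullet> v j) powr (p - 2))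
        (at (z j - m \<bullet> v j + 0 * (\<beta> j - v j \<bullet> D)))"
      using has_real_derivative_powr[of "z j - m \<bullet> v j" "p - 1"] pos that by simp
    ultimately have "((\<lambda>t. (z j - m \<bullet> v j + t * (\<beta> j - v j \<bullet> D)) powr (p - 1)) has_real_derivative
        (p - 1) * (z j - m \<bullet> v j) powr (p - 2) * (\<beta> j - v j \<bullet> D)) (at 0)"
      by (rule DERIV_chain2[rotated])
    from has_vector_derivative_scaleR[OF DERIV_cmult_right[OF this, of "alpha j"]
        has_vector_derivative_const[of "v j"]]
    have "((\<lambda>t. ((z j - m \<bullet> v j + t * (\<beta> j - v j \<bullet> D)) powr (p - 1) * alpha j) *\<^sub>R v j)
      has_vector_derivative ((p - 1) * (alpha j * (z j - m \<bullet> v j) powr (p - 2) * (\<beta> j - v j \<bullet> D))) *\<^sub>R v j) (at 0)"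
      by (simp add: algebra_simps)
    moreover have "z j + t * \<beta> j - (m + t *\<^sub>R D) \<bullet> v j = z j - m \<bullet> v j + t * (\<beta> j - v j \<bullet> D)" for t
      by (simp add: inner_add_left inner_commute algebra_simps)
    ultimately show ?thesis by (simp only:)
  qed
  then have "((\<lambda>t. \<Sum>j<N. ((z j + t * \<beta> j - (m + t *\<^sub>R D) \<bullet> v j) powr (p - 1) * alpha j) *\<^sub>R v j)
      has_vector_derivative (\<Sum>j<N. ((p - 1) * (alpha j * (z j - m \<bullet> v j) powr (p - 2) * (\<beta> j - v j \<bullet> D))) *\<^sub>R v j)) (at 0)"
    by (intro has_vector_derivative_sum) simp
  then show ?thesis by (simp add: Phi_grad_def scaleR_sum_right)
qed

lemma has_vector_derivative_at_iff_eventually: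
  fixes f :: "real \<Rightarrow> 'a::real_normed_vector"
  shows "(f has_vector_derivative D) (at x) \<longleftrightarrow>
    (\<forall>e>0. \<forall>\<^sub>F t in at x. norm (f t - f x - (t - x) *\<^sub>R D) < e * \<bar>t - x\<bar>)"
proof -
  have "eventually (\<lambda>t. norm (f t - f x - (t - x) *\<^sub>R D) / norm (t - x) < e) (at x) \<longleftrightarrow>
      eventually (\<lambda>t. norm (f t - f x - (t - x) *\<^sub>R D) < e * \<bar>t - x\<bar>) (at x)" for e
    by (rule eventually_cong[OF eventually_neq_at_within[of x]]) (simp add: divide_less_eq)
  then show ?thesis
    unfolding has_vector_derivative_def has_derivative_iff_norm tendsto_iff
    by (simp add: bounded_linear_scaleR_left)
qed

lemma eventually_slack_close:
  fixes v :: "nat \<Rightarrow> 'a::euclidean_space"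
  assumes unit: "\<forall>j<N. norm (v j) = 1" and z_pos: "\<forall>j<N. z j > 0"
  shows "\<forall>\<^sub>F t in at 0. \<forall>\<xi>. norm \<xi> \<le> \<bar>t\<bar> * R \<longrightarrow> (\<forall>j<N. \<bar>t * \<beta> j - \<xi> \<bullet> v j\<bar> < z j / 2)"
proof -
  have "\<forall>\<^sub>F t in at 0. \<forall>\<xi>. norm \<xi> \<le> \<bar>t\<bar> * R \<longrightarrow> \<bar>t * \<beta> j - \<xi> \<bullet> v j\<bar> < z j / 2" if j: "j < N" for j
  proof -
    have bound: "\<bar>t * \<beta> j - \<xi> \<bullet> v j\<bar> \<le> \<bar>t\<bar> * (\<bar>\<beta> j\<bar> + R)" if "norm \<xi> \<le> \<bar>t\<bar> * R" for t \<xi>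
    proof -
      have "\<bar>\<xi> \<bullet> v j\<bar> \<le> norm \<xi>" using Cauchy_Schwarz_ineq2[of \<xi> "v j"] unit j by simp
      then show ?thesis
        using that abs_triangle_ineq4[of "t * \<beta> j" "\<xi> \<bullet> v j"] by (simp add: abs_mult distrib_left)
    qed
    have "((\<lambda>t::real. \<bar>t\<bar> * (\<bar>\<beta> j\<bar> + R)) \<longlongrightarrow> 0) (at 0)"
      by (auto intro!: tendsto_eq_intros)
    then have "\<forall>\<^sub>F t in at 0. \<bar>t\<bar> * (\<bar>\<beta> j\<bar> + R) < z j / 2"
      using z_pos j by (intro order_tendstoD) auto
    then show ?thesis by (rule eventually_mono) (meson bound le_less_trans)
  qed
  then have "\<forall>\<^sub>F t in at 0. \<forall>j\<in>{..<N}. \<forall>\<xi>. norm \<xi> \<le> \<bar>t\<bar> * R \<longrightarrow> \<bar>t * \<beta> j - \<xi> \<bullet> v j\<bar> < z j / 2"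
    by (intro eventually_ball_finite) auto
  then show ?thesis by (rule eventually_mono) blast
qed

lemma Phi_real_sphere_less_center:
  fixes v :: "nat \<Rightarrow> 'a::euclidean_space"
  assumes p: "0 \<le> p" "p < 1" and alpha_pos: "\<forall>j<N. alpha j > 0"
    and \<kappa>: "\<forall>u\<in>sphere 0 1. \<kappa> \<le> (\<Sum>j<N. alpha j * (v j \<bullet> u)\<^sup>2)"
    and slack: "\<forall>\<xi>\<in>cball c r. \<forall>j<N. 0 < z j - \<xi> \<bullet> v j \<and> z j - \<xi> \<bullet> v j \<le> hi"
    and grad_small: "norm (Phi_grad N v alpha p z c) < (1 - p) * hi powr (p - 2) * \<kappa> * r / 2"
    and y: "norm (y - c) = r" and "r > 0"
  shows "Phi_real N v alpha p z y < Phi_real N v alpha p z c"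
proof -
  define k where "k = powlog_coeff p"
  define C where "C = k * (1 - p) * hi powr (p - 2) / 2"
  define a where "a j = z j - c \<bullet> v j" for j
  define b where "b j = z j - y \<bullet> v j" for j
  have k: "k > 0" using powlog_coeff_pos[OF p(1)] by (simp add: k_def)
  have "y \<in> cball c r" "c \<in> cball c r" using y \<open>r > 0\<close> by (auto simp: dist_norm norm_minus_commute)
  then have "alpha j * powlog p (b j)
      \<le> alpha j * (powlog p (a j) + powlog' p (a j) * (b j - a j)) - C * (alpha j * (b j - a j)\<^sup>2)"
    if "j < N" for j
    using mult_left_mono[OF powlog_below_tangent_quadratic[OF p, of "a j" hi "b j"], of "alpha j"]
      slack alpha_pos that by (fastforce simp: a_def b_def C_def k_def algebra_simps)
  then have "(\<Sum>j<N. alpha j * powlog p (b j)) \<le> (\<Sum>j<N.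
      alpha j * (powlog p (a j) + powlog' p (a j) * (b j - a j)) - C * (alpha j * (b j - a j)\<^sup>2))"
    by (intro sum_mono) simp
  also have "\<dots> = Phi_real N v alpha p z c
      + (\<Sum>j<N. alpha j * (powlog' p (a j) * (b j - a j))) - C * (\<Sum>j<N. alpha j * (b j - a j)\<^sup>2)"
    by (simp add: Phi_real_def a_def sum_subtractf sum.distrib distrib_left sum_distrib_left)
  finally have "Phi_real N v alpha p z y \<le> Phi_real N v alpha p z c
      + (\<Sum>j<N. alpha j * (powlog' p (a j) * (b j - a j))) - C * (\<Sum>j<N. alpha j * (b j - a j)\<^sup>2)"
    by (simp add: Phi_real_def b_def)
  moreover have "(\<Sum>j<N. alpha j * (powlog' p (a j) * (b j - a j)))
      = - k * (Phi_grad N v alpha p z c \<bullet> (y - c))"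
    unfolding a_def b_def k_def by (rule Phi_real_tangent_term)
  moreover have "- (Phi_grad N v alpha p z c \<bullet> (y - c)) \<le> norm (Phi_grad N v alpha p z c) * r"
    using Cauchy_Schwarz_ineq2[of "Phi_grad N v alpha p z c" "y - c"] y by (simp add: abs_le_iff)
  then have "- k * (Phi_grad N v alpha p z c \<bullet> (y - c)) \<le> k * (norm (Phi_grad N v alpha p z c) * r)"
    using mult_left_mono[of _ _ k] k by fastforce
  moreover have "C * (r\<^sup>2 * \<kappa>) \<le> C * (\<Sum>j<N. alpha j * (b j - a j)\<^sup>2)"
  proof -
    define u where "u = (1 / r) *\<^sub>R (y - c)"
    have "b j - a j = - r * (v j \<bullet> u)" for j
      using \<open>r > 0\<close> by (simp add: u_def a_def b_def inner_diff_right inner_commute)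
    then have "(\<Sum>j<N. alpha j * (b j - a j)\<^sup>2) = r\<^sup>2 * (\<Sum>j<N. alpha j * (v j \<bullet> u)\<^sup>2)"
      by (simp add: sum_distrib_left power_mult_distrib mult.left_commute)
    moreover have "u \<in> sphere 0 1" using y \<open>r > 0\<close> by (simp add: u_def)
    then have "\<kappa> \<le> (\<Sum>j<N. alpha j * (v j \<bullet> u)\<^sup>2)" using \<kappa> by blast
    moreover have "C \<ge> 0" using k p by (simp add: C_def)
    ultimately show ?thesis by (simp add: mult_left_mono)
  qed
  moreover have "k * (norm (Phi_grad N v alpha p z c) * r) < C * (r\<^sup>2 * \<kappa>)"
    using mult_strict_left_mono[OF grad_small, of "k * r"] k \<open>r > 0\<close>
    by (simp add: C_def power2_eq_square algebra_simps)
  ultimately show ?thesis by linarith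
qed

lemma xi_in_ball_if_sphere_less_center:
  fixes v :: "nat \<Rightarrow> 'a::euclidean_space"
  assumes not_hemi: "\<forall>u::'a. norm u = 1 \<longrightarrow> (\<exists>j<N. v j \<bullet> u < 0)"
    and alpha_pos: "\<forall>j<N. alpha j > 0" and p: "0 \<le> p" "p < 1"
    and slack: "\<forall>\<xi>\<in>cball c r. \<forall>j<N. z j - \<xi> \<bullet> v j > 0"
    and sphere_less: "\<And>y. norm (y - c) = r \<Longrightarrow> Phi_real N v alpha p z y < Phi_real N v alpha p z c"
    and "r > 0"
  shows "dist (xi N v alpha p z) c < r"
proof -
  have "continuous_on (cball c r) (Phi_real N v alpha p z)"
    using slack by (rule continuous_on_Phi_real)
  moreover have "c \<in> cball c r" using \<open>r > 0\<close> by simp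
  ultimately obtain m where m: "m \<in> cball c r"
    "\<forall>\<xi>\<in>cball c r. Phi_real N v alpha p z \<xi> \<le> Phi_real N v alpha p z m"
    using continuous_attains_sup[OF compact_cball] by blast
  have "norm (m - c) \<noteq> r"
  proof
    assume "norm (m - c) = r"
    then have "Phi_real N v alpha p z m < Phi_real N v alpha p z c" by (rule sphere_less)
    then show False using m(2) \<open>c \<in> cball c r\<close> by (meson leD)
  qed
  then have "dist c m < r" using m(1) by (simp add: dist_norm norm_minus_commute)
  have "ball m (r - dist c m) \<subseteq> cball c r"
  proof
    fix x assume "x \<in> ball m (r - dist c m)"
    then show "x \<in> cball c r" using dist_triangle[of c x m] by simp
  qed
  then have "xi N v alpha p z = m"
    using slack m \<open>dist c m < r\<close>
    by (intro xi_eq_if_local_max[OF not_hemi alpha_pos p, where e = "r - dist c m"]) auto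
  then show ?thesis using \<open>dist c m < r\<close> by (simp add: dist_commute)
qed

lemma xi_close_to_approx_critical_point:
  fixes v :: "nat \<Rightarrow> 'a::euclidean_space"
  assumes not_hemi: "\<forall>u::'a. norm u = 1 \<longrightarrow> (\<exists>j<N. v j \<bullet> u < 0)"
    and alpha_pos: "\<forall>j<N. alpha j > 0" and p: "0 \<le> p" "p < 1"
    and \<kappa>: "\<forall>u\<in>sphere 0 1. \<kappa> \<le> (\<Sum>j<N. alpha j * (v j \<bullet> u)\<^sup>2)"
    and slack: "\<forall>\<xi>\<in>cball c r. \<forall>j<N. 0 < z j - \<xi> \<bullet> v j \<and> z j - \<xi> \<bullet> v j \<le> hi"
    and grad_small: "norm (Phi_grad N v alpha p z c) < (1 - p) * hi powr (p - 2) * \<kappa> * r / 2"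
    and "r > 0"
  shows "dist (xi N v alpha p z) c < r"
  using assms
  by (intro xi_in_ball_if_sphere_less_center[OF not_hemi alpha_pos p]
      Phi_real_sphere_less_center[OF p alpha_pos \<kappa> slack grad_small]) auto

lemma xi_has_vector_derivative:
  fixes v :: "nat \<Rightarrow> 'a::euclidean_space"
  assumes unit: "\<forall>j<N. norm (v j) = 1"
    and not_hemi: "\<forall>u::'a. norm u = 1 \<longrightarrow> (\<exists>j<N. v j \<bullet> u < 0)"
    and alpha_pos: "\<forall>j<N. alpha j > 0" and p: "0 \<le> p" "p < 1" and z_pos: "\<forall>j<N. z j > 0"
    and crit: "Phi_grad N v alpha p z 0 = 0"
    and tangent: "(\<Sum>j<N. (alpha j * z j powr (p - 2) * (\<beta> j - v j \<bullet> D)) *\<^sub>R v j) = 0"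
  shows "((\<lambda>t. xi N v alpha p (\<lambda>j. z j + t * \<beta> j)) has_vector_derivative D) (at 0)"
proof -
  define G where "G t = Phi_grad N v alpha p (\<lambda>j. z j + t * \<beta> j) (t *\<^sub>R D)" for t
  have "(G has_vector_derivative 0) (at 0)"
    using Phi_grad_has_vector_derivative[of N z 0 v alpha p \<beta> D] z_pos tangent
    unfolding G_def[abs_def] by simp
  moreover have "G 0 = 0" using crit by (simp add: G_def)
  ultimately have G_small: "\<forall>e>0. \<forall>\<^sub>F t in at 0. norm (G t) < e * \<bar>t\<bar>"
    by (simp add: has_vector_derivative_at_iff_eventually)
  obtain \<kappa> where \<kappa>: "\<kappa> > 0" "\<forall>u\<in>sphere 0 1. \<kappa> \<le> (\<Sum>j<N. alpha j * (v j \<bullet> u)\<^sup>2)"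
    using weighted_frame_lower_bound[OF not_hemi alpha_pos] by blast
  define hi where "hi = 1 + 2 * (\<Sum>j<N. z j)"
  have z_le: "j < N \<Longrightarrow> 2 * z j < hi" for j
    using member_le_sum[of j "{..<N}" z] z_pos by (simp add: hi_def less_imp_le)
  define K where "K = (1 - p) * hi powr (p - 2) * \<kappa> / 2"
  have "(\<Sum>j<N. z j) \<ge> 0" using z_pos by (intro sum_nonneg) (simp add: less_imp_le)
  then have "hi > 0" by (simp add: hi_def)
  then have "K > 0" using \<kappa> p by (simp add: K_def)
  have xi_z: "xi N v alpha p z = 0"
    using xi_eq_if_Phi_grad_eq_0[OF not_hemi alpha_pos p _ crit] z_pos by simp
  show ?thesis unfolding has_vector_derivative_at_iff_eventually
  proof (intro allI impI)
    fix e :: real assume "e > 0"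
    have "\<forall>\<^sub>F t in at 0. norm (G t) < K * e * \<bar>t\<bar>" using G_small \<open>K > 0\<close> \<open>e > 0\<close> by simp
    moreover have "\<forall>\<^sub>F t in at 0. \<forall>\<xi>. norm \<xi> \<le> \<bar>t\<bar> * (norm D + e) \<longrightarrow>
        (\<forall>j<N. \<bar>t * \<beta> j - \<xi> \<bullet> v j\<bar> < z j / 2)"
      by (rule eventually_slack_close[OF unit z_pos])
    moreover have "\<forall>\<^sub>F t in at 0. t \<noteq> (0::real)" by (simp add: eventually_at_filter)
    ultimately show "\<forall>\<^sub>F t in at 0. norm (xi N v alpha p (\<lambda>j. z j + t * \<beta> j)
        - xi N v alpha p (\<lambda>j. z j + 0 * \<beta> j) - (t - 0) *\<^sub>R D) < e * \<bar>t - 0\<bar>"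
    proof eventually_elim
      case (elim t)
      define r where "r = e * \<bar>t\<bar>"
      have "r > 0" using \<open>e > 0\<close> elim(3) by (simp add: r_def)
      have "\<forall>\<xi>\<in>cball (t *\<^sub>R D) r. \<forall>j<N.
          0 < z j + t * \<beta> j - \<xi> \<bullet> v j \<and> z j + t * \<beta> j - \<xi> \<bullet> v j \<le> hi"
      proof (intro ballI allI impI)
        fix \<xi> j assume "\<xi> \<in> cball (t *\<^sub>R D) r" "j < N"
        then have "norm \<xi> \<le> \<bar>t\<bar> * (norm D + e)"
          using norm_triangle_ineq2[of \<xi> "t *\<^sub>R D"]
          by (simp add: r_def dist_norm norm_minus_commute algebra_simps)
        then have "\<bar>t * \<beta> j - \<xi> \<bullet> v j\<bar> < z j / 2" using elim(2) \<open>j < N\<close> by blast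
        then show "0 < z j + t * \<beta> j - \<xi> \<bullet> v j \<and> z j + t * \<beta> j - \<xi> \<bullet> v j \<le> hi"
          using z_le[OF \<open>j < N\<close>] z_pos \<open>j < N\<close> unfolding abs_less_iff by force
      qed
      moreover have "norm (G t) < (1 - p) * hi powr (p - 2) * \<kappa> * r / 2"
        using elim(1) by (simp add: K_def r_def)
      ultimately have "dist (xi N v alpha p (\<lambda>j. z j + t * \<beta> j)) (t *\<^sub>R D) < r"
        using \<open>r > 0\<close> unfolding G_def by (rule xi_close_to_approx_critical_point[OF not_hemi alpha_pos p \<kappa>(2)])
      then show ?case using xi_z by (simp add: dist_norm r_def)
    qed
  qed
qed

theorem lemma4p3:
  fixes v :: "nat \<Rightarrow> 'a::euclidean_space" and alpha :: "nat \<Rightarrow> real"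
    and N :: nat and p :: real and z \<beta> :: "nat \<Rightarrow> real"
  assumes unit: "\<forall>j<N. norm (v j) = 1"
    and not_hemi: "\<forall>u::'a. norm u = 1 \<longrightarrow> (\<exists>j<N. v j \<bullet> u < 0)"
    and alpha_pos: "\<forall>j<N. alpha j > 0"
    and p: "0 \<le> p" "p < 1"
    and z_pos: "\<forall>j<N. z j > 0"
    and xi0: "xi N v alpha p z = 0"
  shows "(\<exists>D. ((\<lambda>t. xi N v alpha p (\<lambda>j. z j + t * \<beta> j)) has_vector_derivative D) (at 0))
         \<and> (\<Sum>j<N. (z j powr (p - 1) * alpha j) *\<^sub>R v j) = 0"
proof -
  obtain m where m_pos: "\<forall>j<N. z j - m \<bullet> v j > 0" and crit: "Phi_grad N v alpha p z m = 0"
    using exists_critical_point[OF not_hemi alpha_pos p z_pos] by blast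
  have "m = 0" using xi_eq_if_Phi_grad_eq_0[OF not_hemi alpha_pos p m_pos crit] xi0 by simp
  with crit have crit0: "Phi_grad N v alpha p z 0 = 0" by simp
  have "\<forall>j<N. alpha j * z j powr (p - 2) > 0" using alpha_pos z_pos by (auto intro: mult_pos_pos)
  then obtain D where "(\<Sum>j<N. (alpha j * z j powr (p - 2) * (v j \<bullet> D)) *\<^sub>R v j)
      = (\<Sum>j<N. (alpha j * z j powr (p - 2) * \<beta> j) *\<^sub>R v j)"
    by (rule weighted_frame_operator_surj[OF not_hemi])
  then have "(\<Sum>j<N. (alpha j * z j powr (p - 2) * (\<beta> j - v j \<bullet> D)) *\<^sub>R v j) = 0"
    by (simp add: right_diff_distrib scaleR_diff_left sum_subtractf)
  then have "((\<lambda>t. xi N v alpha p (\<lambda>j. z j + t * \<beta> j)) has_vector_derivative D) (at 0)"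
    by (rule xi_has_vector_derivative[OF unit not_hemi alpha_pos p z_pos crit0])
  moreover have "(\<Sum>j<N. (z j powr (p - 1) * alpha j) *\<^sub>R v j) = 0"
    using crit0 by (simp add: Phi_grad_def)
  ultimately show ?thesis by blast
qed

end
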